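(* Let $q$ be a prime power and let $\mathcal{C}$ be a $\mathcal{GRS}(n,k,d)$ code over $\mathbb{F}_q$ with $d=n-k+1$, distinct evaluation points $\alpha_0,\dots,\alpha_{n-1}\in\mathbb{F}_q$ and non-zero column multipliers $v_0,\dots,v_{n-1}$. Let $\vec c\in\mathcal{C}$ and $\vec r\in\mathbb{F}_q^n$, let $E=\{i : c_i\neq r_i\}$, $\epsilon=|E|$, and assume $\epsilon>d/2$. Let $\Lambda(x)=\prod_{i\in E}(x-\alpha_i)$. Let $H_1(x),H_2(x)\in\mathbb{F}_q[x]$ be coprime polynomials and $A(x),B(x)\in\mathbb{F}_q[x]$ polynomials such that $$\Lambda(x)=A(x)H_1(x)+B(x)H_2(x),\qquad \deg A=\epsilon-\deg H_1,\qquad \deg B\le \epsilon-d+\deg H_1 .$$ Let $L\le n$, $\tau$ and $\tau_L$ be positive integers, put $w_1=\tau-\deg H_1$ and $w_2=\tau-d+\deg H_1$, and assume $w_1,w_2\ge 0$. For $i=0,\dots,L-1$ let $P_i=(H_2(\alpha_i):-H_1(\alpha_i))\in\mathbb{P}^1_{\mathbb{F}_q}$. If $$\tau_L^2>L(2\tau-d),$$ then there exist positive integers $s,\ell$ and a non-zero polynomial $Q(x,y,z)=\sum_{j=0}^{\ell}Q_j(x)y^jz^{\ell-j}$ with $Q_j\in\mathbb{F}_q[x]$ such that $Q$ has a zero of multiplicity at least $s$ at $(\alpha_i,P_i)$ for every $i=0,\dots,L-1$ and $\deg_{(1,w_1,w_2)}Q<s\tau_L$. Furthermore, letting $\epsilon_L=|E\cap\{0,\dots,L-1\}|$,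 if $\epsilon=\tau$ and $\epsilon_L=\tau_L$, then every such $Q$ satisfies $Q(x,A(x),B(x))=0$.
   Context: A generalised Reed–Solomon code $\mathcal{GRS}(n,k,d)$ over $\mathbb{F}_q$ is $\{(v_0C(\alpha_0),\dots,v_{n-1}C(\alpha_{n-1})) : C\in\mathbb{F}_q[x],\ \deg C<k\}$. In the paper, $H_1,H_2$ are intermediate polynomials of the Extended Euclidean Algorithm run on $x^{d-1}$ and the syndrome polynomial of $\vec r$, and positions are indexed so that positions $0,\dots,L-1$ are the $L$ least reliable ones; only the stated properties are used. Points of $\mathbb{P}^1_{\mathbb{F}_q}$ are pairs $(a:b)\neq(0:0)$ up to non-zero scalar multiples. The $(1,w_1,w_2)$-weighted degree of $x^uy^jz^h$ is $u+w_1j+w_2h$, and of a polynomial the maximum over its monomials. A homogeneous $Q(x,y,z)$ has a zero of multiplicity at least $s$ at $(\alpha,(a:b))\in\mathbb{F}_q\times\mathbb{P}^1_{\mathbb{F}_q}$ if: when $b\neq0$, the polynomial $Q(x+\alpha,\,y+a/b,\,1)\in\mathbb{F}_q[x,y]$ has no monomial $x^uy^v$ with $u+v<s$; when $b=0$, the polynomial $Q(x+\alpha,1,z+0)\in\mathbb{F}_q[x,z]$ has no monomial $x^uz^v$ with $u+v<s$. *)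

theory Defs
  imports "HOL-Computational_Algebra.Computational_Algebra"
begin

text \<open>A homogeneous polynomial Q(x,y,z) = sum_{j=0..l} Q_j(x) y^j z^(l-j) is represented
  by its degree l in (y,z) and the coefficient family Q :: nat => 'a poly (only j <= l matter).\<close>

definition hnonzero :: "nat \<Rightarrow> (nat \<Rightarrow> 'a::zero poly) \<Rightarrow> bool" where
  "hnonzero l Q \<longleftrightarrow> (\<exists>j\<le>l. Q j \<noteq> 0)"

text \<open>Coefficient of x^u y^v in Q(x+alpha, y+t, 1).\<close>
definition shift_coeff_y :: "nat \<Rightarrow> (nat \<Rightarrow> 'a::comm_ring_1 poly) \<Rightarrow> 'a \<Rightarrow> 'a \<Rightarrow> nat \<Rightarrow> nat \<Rightarrow> 'a" where
  "shift_coeff_y l Q alpha t u v =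
     (\<Sum>j\<le>l. coeff (pcompose (Q j) [:alpha, 1:]) u * coeff ([:t, 1:] ^ j) v)"

text \<open>Coefficient of x^u z^v in Q(x+alpha, 1, z+0).\<close>
definition shift_coeff_z :: "nat \<Rightarrow> (nat \<Rightarrow> 'a::comm_ring_1 poly) \<Rightarrow> 'a \<Rightarrow> nat \<Rightarrow> nat \<Rightarrow> 'a" where
  "shift_coeff_z l Q alpha u v =
     (\<Sum>j\<le>l. coeff (pcompose (Q j) [:alpha, 1:]) u * coeff ([:0, 1:] ^ (l - j)) v)"

definition zero_mult_ge :: "nat \<Rightarrow> (nat \<Rightarrow> 'a::field poly) \<Rightarrow> 'a \<Rightarrow> 'a \<Rightarrow> 'a \<Rightarrow> nat \<Rightarrow> bool" where
  "zero_mult_ge l Q alpha a b s =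
     (if b \<noteq> 0 then (\<forall>u v. u + v < s \<longrightarrow> shift_coeff_y l Q alpha (a / b) u v = 0)
      else (\<forall>u v. u + v < s \<longrightarrow> shift_coeff_z l Q alpha u v = 0))"

definition wdeg :: "int \<Rightarrow> int \<Rightarrow> nat \<Rightarrow> (nat \<Rightarrow> 'a::zero poly) \<Rightarrow> int" where
  "wdeg w1 w2 l Q = Max {int (degree (Q j)) + w1 * int j + w2 * int (l - j) | j. j \<le> l \<and> Q j \<noteq> 0}"

definition heval :: "nat \<Rightarrow> (nat \<Rightarrow> 'a::comm_semiring_1 poly) \<Rightarrow> 'a poly \<Rightarrow> 'a poly \<Rightarrow> 'a poly" where
  "heval l Q A B = (\<Sum>j\<le>l. Q j * A ^ j * B ^ (l - j))"

definition GRS :: "nat \<Rightarrow> nat \<Rightarrow> (nat \<Rightarrow> 'a::comm_ring_1) \<Rightarrow> (nat \<Rightarrow> 'a) \<Rightarrow> (nat \<Rightarrow> 'a) set" where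
  "GRS n k alpha v = {c. \<exists>C. (C = 0 \<or> degree C < k) \<and>
       (\<forall>i<n. c i = v i * poly C (alpha i)) \<and> (\<forall>i\<ge>n. c i = 0)}"

end

theory Submission
  imports Defs
begin

text \<open>Existence is linear algebra: the multiplicity conditions at the \<open>L\<close> points are
  \<open>L s (s + 1) / 2\<close> homogeneous linear equations in the coefficients of \<open>Q\<close>, and
  \<open>\<tau>\<^sub>L\<^sup>2 > L (2\<tau> - d)\<close> leaves room to pick \<open>s\<close> and \<open>\<ell>\<close> with more unknowns than
  equations, so a non-zero solution exists.
  For the vanishing, at an erroneous position \<open>i < L\<close> the locator gives
  \<open>A(\<alpha>\<^sub>i) H\<^sub>1(\<alpha>\<^sub>i) + B(\<alpha>\<^sub>i) H\<^sub>2(\<alpha>\<^sub>i) = 0\<close>, i.e. the curve \<open>x \<mapsto> (A(x) : B(x))\<close> passes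
  through \<open>P\<^sub>i\<close> at \<open>x = \<alpha>\<^sub>i\<close>; hence \<open>Q(x, A(x), B(x))\<close> vanishes to order \<open>s\<close> there.
  These are \<open>s \<epsilon>\<^sub>L = s \<tau>\<^sub>L\<close> zeros, while \<open>deg A \<le> w\<^sub>1\<close> and \<open>deg B \<le> w\<^sub>2\<close> bound its degree
  by the weighted degree of \<open>Q\<close>, which is smaller.\<close>

section \<open>Vanishing of \<open>Q(x, A(x), B(x))\<close>\<close>

lemma pcompose_X_power: "pcompose ([:0, 1:] ^ n) p = p ^ n"
  by (induction n) (simp_all add: pcompose_mult pcompose_pCons pcompose_1)

lemma taylor_expansion:
  fixes g :: "'a::idom poly"
  assumes "degree g \<le> N"
  shows "g = (\<Sum>u\<le>N. smult (coeff (pcompose g [:a, 1:]) u) ([:-a, 1:] ^ u))"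
proof -
  let ?h = "pcompose g [:a, 1:]"
  have "degree ?h \<le> N" using assms by (simp add: degree_pcompose)
  then have "?h = (\<Sum>u\<le>N. monom (coeff ?h u) u)"
    by (simp add: poly_as_sum_of_monoms')
  moreover have "pcompose ?h [:-a, 1:] = g"
    by (simp add: pcompose_assoc[symmetric] pcompose_pCons)
  ultimately have "g = pcompose (\<Sum>u\<le>N. monom (coeff ?h u) u) [:-a, 1:]" by simp
  also have "\<dots> = (\<Sum>u\<le>N. smult (coeff ?h u) ([:-a, 1:] ^ u))"
    by (simp add: pcompose_sum monom_altdef pcompose_smult pcompose_X_power)
  finally show ?thesis .
qed

text \<open>Expanding each \<open>Q j\<close> in powers of \<open>x - \<alpha>\<close> and each \<open>F j\<close> in the basis
  \<open>D ^ v * E ^ (l - v)\<close>, every surviving term carries the factor \<open>(x - \<alpha>) ^ (u + v)\<close>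
  with \<open>u + v \<ge> s\<close>.\<close>
lemma linear_power_dvd_sum_of_vanishing_shift_coeffs:
  fixes Q F :: "nat \<Rightarrow> 'a::field poly" and D E :: "'a poly" and c :: "nat \<Rightarrow> nat \<Rightarrow> 'a"
  assumes F: "\<And>j. j \<le> l \<Longrightarrow> F j = (\<Sum>v\<le>l. smult (c j v) (D ^ v * E ^ (l - v)))"
    and D: "[:-\<alpha>, 1:] dvd D"
    and vanish: "\<And>u v. u + v < s \<Longrightarrow> (\<Sum>j\<le>l. coeff (pcompose (Q j) [:\<alpha>, 1:]) u * c j v) = 0"
  shows "[:-\<alpha>, 1:] ^ s dvd (\<Sum>j\<le>l. Q j * F j)"
proof -
  define p where "p = [:-\<alpha>, 1:]"
  define N where "N = (\<Sum>j\<le>l. degree (Q j))"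
  define q where "q j u = coeff (pcompose (Q j) [:\<alpha>, 1:]) u" for j u
  define M where "M u v = p ^ u * (D ^ v * E ^ (l - v))" for u v
  have Q: "Q j = (\<Sum>u\<le>N. smult (q j u) (p ^ u))" if "j \<le> l" for j
  proof -
    have "degree (Q j) \<le> N" unfolding N_def using that by (intro member_le_sum) auto
    then show ?thesis unfolding q_def p_def by (rule taylor_expansion)
  qed
  have "(\<Sum>j\<le>l. Q j * F j) = (\<Sum>j\<le>l. \<Sum>u\<le>N. \<Sum>v\<le>l. smult (c j v * q j u) (M u v))"
    by (intro sum.cong refl)
      (simp add: Q F sum_product M_def mult_smult_left mult_smult_right mult.assoc)
  also have "\<dots> = (\<Sum>u\<le>N. \<Sum>j\<le>l. \<Sum>v\<le>l. smult (c j v * q j u) (M u v))"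
    by (rule sum.swap)
  also have "\<dots> = (\<Sum>u\<le>N. \<Sum>v\<le>l. smult (\<Sum>j\<le>l. c j v * q j u) (M u v))"
    unfolding smult_sum by (intro sum.cong refl sum.swap)
  finally have expand: "(\<Sum>j\<le>l. Q j * F j) = \<dots>" .
  obtain D' where D': "D = p * D'" using D unfolding p_def by blast
  have "p ^ s dvd smult (\<Sum>j\<le>l. c j v * q j u) (M u v)" for u v
  proof (cases "u + v < s")
    case True
    then show ?thesis using vanish unfolding q_def by (simp add: mult.commute)
  next
    case False
    then have "p ^ s dvd p ^ (u + v)" by (simp add: le_imp_power_dvd)
    moreover have "M u v = p ^ (u + v) * (D' ^ v * E ^ (l - v))"
      unfolding M_def D' by (simp add: power_mult_distrib power_add mult_ac)
    ultimately show ?thesis by (simp add: dvd_smult)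
  qed
  then show ?thesis unfolding expand p_def[symmetric] by (intro dvd_sum)
qed

lemma power_mult_power_shift_basis:
  fixes A B :: "'a::field poly"
  assumes "j \<le> l"
  shows "A ^ j * B ^ (l - j) =
    (\<Sum>v\<le>l. smult (coeff ([:t, 1:] ^ j) v) ((A - smult t B) ^ v * B ^ (l - v)))"
proof -
  define D where "D = A - smult t B"
  have "A ^ j * B ^ (l - j) = (\<Sum>v\<le>j. of_nat (j choose v) * D ^ v * (smult t B) ^ (j - v)) * B ^ (l - j)"
    by (simp add: D_def binomial_ring[symmetric])
  also have "\<dots> = (\<Sum>v\<le>j. smult (coeff ([:t, 1:] ^ j) v) (D ^ v * B ^ (l - v)))"
    unfolding sum_distrib_right
  proof (intro sum.cong refl)
    fix v assume v: "v \<in> {..j}"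
    then have "B ^ (j - v) * B ^ (l - j) = B ^ (l - v)" using assms by (simp flip: power_add)
    then show "of_nat (j choose v) * D ^ v * (smult t B) ^ (j - v) * B ^ (l - j) =
        smult (coeff ([:t, 1:] ^ j) v) (D ^ v * B ^ (l - v))"
      using v by (simp add: coeff_linear_poly_power smult_power of_nat_mult_conv_smult
          mult_ac flip: smult_smult) (simp add: smult_smult mult.commute)
  qed
  also have "\<dots> = (\<Sum>v\<le>l. smult (coeff ([:t, 1:] ^ j) v) (D ^ v * B ^ (l - v)))"
    using assms by (intro sum.mono_neutral_left) (auto simp: coeff_eq_0 degree_linear_power)
  finally show ?thesis unfolding D_def .
qed

lemma power_mult_power_swap_basis:
  fixes A B :: "'a::comm_ring_1 poly"
  assumes "j \<le> l"
  shows "A ^ j * B ^ (l - j) = (\<Sum>v\<le>l. smult (coeff ([:0, 1:] ^ (l - j)) v) (B ^ v * A ^ (l - v)))"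
proof -
  have "(\<Sum>v\<le>l. smult (coeff ([:0, 1:] ^ (l - j)) v) (B ^ v * A ^ (l - v))) =
      (\<Sum>v\<le>l. if v = l - j then B ^ v * A ^ (l - v) else 0)"
    by (intro sum.cong refl) (simp add: monom_altdef[of 1, simplified, symmetric] coeff_monom)
  then show ?thesis using assms by (simp add: sum.delta mult.commute)
qed

text \<open>Hypothesis \<open>on_curve\<close> says that the curve \<open>x \<mapsto> (A x : B x)\<close> passes through
  \<open>(a : b)\<close> at \<open>x = \<alpha>\<close>.\<close>
lemma linear_power_dvd_heval:
  fixes Q :: "nat \<Rightarrow> 'a::field poly"
  assumes ab: "a \<noteq> 0 \<or> b \<noteq> 0" and on_curve: "a * poly B \<alpha> = b * poly A \<alpha>"
    and zero: "zero_mult_ge l Q \<alpha> a b s"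
  shows "[:-\<alpha>, 1:] ^ s dvd heval l Q A B"
proof -
  have heval_eq: "heval l Q A B = (\<Sum>j\<le>l. Q j * (A ^ j * B ^ (l - j)))"
    unfolding heval_def by (simp add: mult.assoc)
  show ?thesis
  proof (cases "b = 0")
    case False
    have "[:-\<alpha>, 1:] dvd A - smult (a / b) B"
      unfolding poly_eq_0_iff_dvd[symmetric] using on_curve False by (simp add: field_simps)
    with zero False show ?thesis unfolding heval_eq
      by (intro linear_power_dvd_sum_of_vanishing_shift_coeffs[where E = B and c = "\<lambda>j. coeff ([:a / b, 1:] ^ j)"])
        (simp_all add: power_mult_power_shift_basis zero_mult_ge_def shift_coeff_y_def)
  next
    case True
    then have "[:-\<alpha>, 1:] dvd B" using ab on_curve by (simp add: poly_eq_0_iff_dvd)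
    with zero True show ?thesis unfolding heval_eq
      by (intro linear_power_dvd_sum_of_vanishing_shift_coeffs[where E = A and c = "\<lambda>j. coeff ([:0, 1:] ^ (l - j))"])
        (simp_all add: power_mult_power_swap_basis zero_mult_ge_def shift_coeff_z_def)
  qed
qed

lemma finite_weighted_degrees:
  "finite {int (degree (Q j)) + w1 * int j + w2 * int (l - j) | j. j \<le> l \<and> Q j \<noteq> 0}"
  by (rule finite_subset[of _ "(\<lambda>j. int (degree (Q j)) + w1 * int j + w2 * int (l - j)) ` {..l}"])
    auto

lemma wdeg_ge:
  assumes "j \<le> l" "Q j \<noteq> 0"
  shows "int (degree (Q j)) + w1 * int j + w2 * int (l - j) \<le> wdeg w1 w2 l Q"
  unfolding wdeg_def by (rule Max_ge[OF finite_weighted_degrees]) (use assms in blast)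

lemma wdeg_less:
  assumes "hnonzero l Q"
    and "\<And>j. j \<le> l \<Longrightarrow> Q j \<noteq> 0 \<Longrightarrow> int (degree (Q j)) + w1 * int j + w2 * int (l - j) < m"
  shows "wdeg w1 w2 l Q < m"
  using assms unfolding wdeg_def hnonzero_def
  by (subst Max_less_iff[OF finite_weighted_degrees]) auto

lemma degree_heval_le_wdeg:
  fixes Q :: "nat \<Rightarrow> 'a::field poly"
  assumes Q: "hnonzero l Q" and w: "0 \<le> w1" "0 \<le> w2"
    and A: "int (degree A) \<le> w1" and B: "int (degree B) \<le> w2"
  shows "int (degree (heval l Q A B)) \<le> wdeg w1 w2 l Q"
proof -
  have term_le: "int (degree (Q j * A ^ j * B ^ (l - j))) \<le> wdeg w1 w2 l Q"
    if "j \<le> l" "Q j \<noteq> 0" for j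
  proof -
    have "degree (Q j * A ^ j * B ^ (l - j)) \<le> degree (Q j) + degree A * j + degree B * (l - j)"
      using degree_mult_le[of "Q j * A ^ j" "B ^ (l - j)"] degree_mult_le[of "Q j" "A ^ j"]
        degree_power_le[of A j] degree_power_le[of B "l - j"] by linarith
    then have "int (degree (Q j * A ^ j * B ^ (l - j))) \<le>
        int (degree (Q j)) + int (degree A) * int j + int (degree B) * int (l - j)"
      by (simp only: of_nat_add[symmetric] of_nat_mult[symmetric] of_nat_le_iff)
    moreover have "int (degree A) * int j \<le> w1 * int j" "int (degree B) * int (l - j) \<le> w2 * int (l - j)"
      using A B by (simp_all add: mult_right_mono)
    ultimately show ?thesis using wdeg_ge[of j l Q w1 w2] that by linarith
  qed
  obtain j0 where "j0 \<le> l" "Q j0 \<noteq> 0" using Q unfolding hnonzero_def by blast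
  then have "0 \<le> wdeg w1 w2 l Q"
    using wdeg_ge[of j0 l Q w1 w2] mult_nonneg_nonneg[OF w(1) of_nat_0_le_iff[of j0]]
      mult_nonneg_nonneg[OF w(2) of_nat_0_le_iff[of "l - j0"]] by linarith
  moreover have "degree (heval l Q A B) \<le> nat (wdeg w1 w2 l Q)"
    unfolding heval_def by (intro degree_sum_le) (use term_le in \<open>force simp: le_nat_iff\<close>)+
  ultimately show ?thesis by linarith
qed

lemma card_mult_le_degree_of_power_dvd:
  fixes R :: "'a::field poly"
  assumes R: "R \<noteq> 0" and F: "finite F" "inj_on \<alpha> F" and s: "0 < s"
    and dvd: "\<And>i. i \<in> F \<Longrightarrow> [:-\<alpha> i, 1:] ^ s dvd R"
  shows "s * card F \<le> degree R"
proof -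
  have order: "s \<le> order x R" if "x \<in> \<alpha> ` F" for x
    using dvd that R by (auto simp: order_divides)
  have "\<alpha> ` F \<subseteq> {x. poly R x = 0}"
    using order s by (force simp: order_root)
  have "s * card F = (\<Sum>x\<in>\<alpha> ` F. s)" using card_image[OF F(2)] by simp
  also have "\<dots> \<le> (\<Sum>x\<in>\<alpha> ` F. order x R)" by (intro sum_mono order)
  also have "\<dots> \<le> (\<Sum>x | poly R x = 0. order x R)"
    using \<open>\<alpha> ` F \<subseteq> _\<close> by (intro sum_mono2) (auto simp: poly_roots_finite R)
  also have "\<dots> \<le> degree R" by (rule sum_order_le_degree[OF R])
  finally show ?thesis .
qed

lemma on_curve_of_locator_root:
  fixes A B H1 H2 :: "'a::field poly"
  assumes "(\<Prod>i\<in>E. [:-\<alpha> i, 1:]) = A * H1 + B * H2" "finite E" "i \<in> E"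
  shows "poly H2 (\<alpha> i) * poly B (\<alpha> i) = - poly H1 (\<alpha> i) * poly A (\<alpha> i)"
proof -
  have "poly (A * H1 + B * H2) (\<alpha> i) = 0"
    using assms by (simp flip: assms(1) add: poly_prod) blast
  then show ?thesis by (simp add: algebra_simps add_eq_0_iff)
qed

lemma heval_eq_0_of_zeros:
  fixes Q :: "nat \<Rightarrow> 'a::field poly"
  assumes Q: "hnonzero l Q" and s: "0 < s" and w: "0 \<le> w1" "0 \<le> w2"
    and A: "int (degree A) \<le> w1" and B: "int (degree B) \<le> w2"
    and F: "finite F" "inj_on \<alpha> F"
    and points: "\<And>i. i \<in> F \<Longrightarrow> (a i \<noteq> 0 \<or> b i \<noteq> 0) \<and> a i * poly B (\<alpha> i) = b i * poly A (\<alpha> i)"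
    and zeros: "\<And>i. i \<in> F \<Longrightarrow> zero_mult_ge l Q (\<alpha> i) (a i) (b i) s"
    and wdeg: "wdeg w1 w2 l Q < int s * int (card F)"
  shows "heval l Q A B = 0"
proof (rule ccontr)
  assume "heval l Q A B \<noteq> 0"
  then have "s * card F \<le> degree (heval l Q A B)"
    using F s by (rule card_mult_le_degree_of_power_dvd)
      (use points zeros linear_power_dvd_heval in blast)
  moreover have "int (degree (heval l Q A B)) \<le> wdeg w1 w2 l Q"
    using Q w A B by (rule degree_heval_le_wdeg)
  ultimately show False using wdeg by (metis of_nat_mult of_nat_le_iff order.trans not_less)
qed

section \<open>Existence of the interpolation polynomial\<close>

text \<open>Pigeonhole: two distinct assignments of the unknowns agree on all equations.\<close>
lemma exists_nontrivial_solution: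
  fixes \<Phi> :: "('b \<Rightarrow> 'a::{finite,field}) \<Rightarrow> 'c \<Rightarrow> 'a"
  assumes S: "finite S" and I: "finite I" and card: "card I < card S"
    and diff: "\<And>f g y. y \<in> I \<Longrightarrow> \<Phi> (\<lambda>x. f x - g x) y = \<Phi> f y - \<Phi> g y"
  shows "\<exists>f. (\<exists>x\<in>S. f x \<noteq> 0) \<and> (\<forall>y\<in>I. \<Phi> f y = 0)"
proof -
  let ?U = "PiE S (\<lambda>_. UNIV :: 'a set)" and ?V = "PiE I (\<lambda>_. UNIV :: 'a set)"
  have "card {0 :: 'a, 1} \<le> card (UNIV :: 'a set)" by (rule card_mono) auto
  then have "card ?V < card ?U"
    using S I card by (simp add: card_PiE power_strict_increasing)
  moreover have "(\<lambda>f. restrict (\<Phi> f) I) ` ?U \<subseteq> ?V" by auto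
  ultimately have "\<not> inj_on (\<lambda>f. restrict (\<Phi> f) I) ?U"
    using card_inj_on_le[of _ ?U ?V] I by (auto simp: finite_PiE)
  then obtain f g where f: "f \<in> ?U" and g: "g \<in> ?U" and "f \<noteq> g"
    and same: "restrict (\<Phi> f) I = restrict (\<Phi> g) I"
    unfolding inj_on_def by blast
  then obtain x where "f x \<noteq> g x" by blast
  moreover have "x \<in> S" using PiE_arb[OF f] PiE_arb[OF g] \<open>f x \<noteq> g x\<close> by metis
  moreover have "\<Phi> (\<lambda>x. f x - g x) y = 0" if "y \<in> I" for y
    using fun_cong[OF same, of y] that diff by simp
  ultimately show ?thesis by (intro exI[of _ "\<lambda>x. f x - g x"]) auto
qed

definition shift_coeff :: "nat \<Rightarrow> (nat \<Rightarrow> 'a::field poly) \<Rightarrow> 'a \<Rightarrow> 'a \<Rightarrow> 'a \<Rightarrow> nat \<Rightarrow> nat \<Rightarrow> 'a" where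
  "shift_coeff l Q \<alpha> a b u v =
     (if b \<noteq> 0 then shift_coeff_y l Q \<alpha> (a / b) u v else shift_coeff_z l Q \<alpha> u v)"

lemma zero_mult_ge_iff_shift_coeff:
  "zero_mult_ge l Q \<alpha> a b s \<longleftrightarrow> (\<forall>u v. u + v < s \<longrightarrow> shift_coeff l Q \<alpha> a b u v = 0)"
  unfolding zero_mult_ge_def shift_coeff_def by simp

lemma shift_coeff_diff:
  "shift_coeff l (\<lambda>j. P j - R j) \<alpha> a b u v = shift_coeff l P \<alpha> a b u v - shift_coeff l R \<alpha> a b u v"
  unfolding shift_coeff_def shift_coeff_y_def shift_coeff_z_def
  by (simp add: pcompose_diff sum_subtractf left_diff_distrib)

definition poly_of_coeffs :: "(nat \<Rightarrow> nat) \<Rightarrow> (nat \<times> nat \<Rightarrow> 'a::comm_monoid_add) \<Rightarrow> nat \<Rightarrow> 'a poly" where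
  "poly_of_coeffs e f j = (\<Sum>u<e j. monom (f (j, u)) u)"

lemma coeff_poly_of_coeffs: "coeff (poly_of_coeffs e f j) k = (if k < e j then f (j, k) else 0)"
  unfolding poly_of_coeffs_def by (simp add: coeff_sum coeff_monom)

lemma poly_of_coeffs_diff:
  "poly_of_coeffs e (\<lambda>x. f x - g x) = (\<lambda>j. poly_of_coeffs e f j - poly_of_coeffs e g j)"
  by (intro ext poly_eqI) (simp add: coeff_poly_of_coeffs)

lemma double_card_triangle: "2 * card (SIGMA u:{..<s}. {..<s - u}) = s * (s + 1)"
proof -
  have "(\<Sum>u<s. s - u) = (\<Sum>u<s. Suc u)"
    by (rule sum.reindex_bij_witness[where i = "\<lambda>u. s - Suc u" and j = "\<lambda>u. s - Suc u"]) auto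
  moreover have "2 * (\<Sum>u<s. Suc u) = s * (s + 1)" by (induction s) simp_all
  ultimately show ?thesis by simp
qed

lemma double_sum_weighted_budget:
  fixes m w1 w2 :: int
  shows "2 * (\<Sum>j\<le>l. m - w1 * int j - w2 * int (l - j)) = (int l + 1) * (2 * m - (w1 + w2) * int l)"
proof -
  have reflect: "(\<Sum>j\<le>l. int (l - j)) = (\<Sum>j\<le>l. int j)"
    by (rule sum.reindex_bij_witness[where i = "\<lambda>j. l - j" and j = "\<lambda>j. l - j"]) auto
  have gauss: "2 * (\<Sum>j\<le>l. int j) = int l * (int l + 1)"
    using double_gauss_sum[of l, where 'a = int] by (simp add: atLeast0AtMost)
  have "(\<Sum>j\<le>l. m - w1 * int j - w2 * int (l - j)) =
      (\<Sum>j\<le>l. m) - w1 * (\<Sum>j\<le>l. int j) - w2 * (\<Sum>j\<le>l. int (l - j))"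
    by (simp only: sum_subtractf sum_distrib_left)
  also have "\<dots> = (int l + 1) * m - (w1 + w2) * (\<Sum>j\<le>l. int j)"
    unfolding reflect by (simp add: algebra_simps)
  finally show ?thesis using gauss by algebra
qed

text \<open>The multiplicity conditions (left) are fewer than the coefficients of the \<open>Q j\<close> with
  \<open>deg (Q j) + w\<^sub>1 j + w\<^sub>2 (l - j) < s T\<close> (right).\<close>
lemma card_conditions_less_card_coeffs:
  fixes w1 w2 T :: int
  assumes "int L * int s * (int s + 1) < (int l + 1) * (2 * int s * T - (w1 + w2) * int l)"
  shows "card ({..<L} \<times> (SIGMA u:{..<s}. {..<s - u})) <
    card (SIGMA j:{..l}. {..<nat (int s * T - w1 * int j - w2 * int (l - j))})"
    (is "card ?I < card ?S")
proof -
  have "2 * card ?I = L * (s * (s + 1))"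
    using double_card_triangle[of s] by (simp add: card_cartesian_product)
  then have "int (2 * card ?I) = int (L * (s * (s + 1)))" by (rule arg_cong)
  then have "2 * int (card ?I) = int L * int s * (int s + 1)" by (simp add: algebra_simps)
  moreover have "(\<Sum>j\<le>l. int s * T - w1 * int j - w2 * int (l - j)) \<le> int (card ?S)"
    by (simp add: sum_mono)
  moreover have "int L * int s * (int s + 1) < (int l + 1) * (2 * (int s * T) - (w1 + w2) * int l)"
    using assms by (simp add: mult.assoc)
  ultimately show ?thesis
    using double_sum_weighted_budget[of "int s * T" w1 w2 l] by linarith
qed

lemma exists_interpolation_polynomial_of_count:
  fixes \<alpha> a b :: "nat \<Rightarrow> 'a::{finite,field}" and w1 w2 T :: int
  assumes count: "int L * int s * (int s + 1) < (int l + 1) * (2 * int s * T - (w1 + w2) * int l)"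
  shows "\<exists>Q. hnonzero l Q \<and> (\<forall>i<L. zero_mult_ge l Q (\<alpha> i) (a i) (b i) s) \<and>
    wdeg w1 w2 l Q < int s * T"
proof -
  define e where "e j = nat (int s * T - w1 * int j - w2 * int (l - j))" for j
  define S where "S = (SIGMA j:{..l}. {..<e j})"
  define I where "I = {..<L} \<times> (SIGMA u:{..<s}. {..<s - u})"
  define \<Phi> where
    "\<Phi> f = (\<lambda>(i, u, v). shift_coeff l (poly_of_coeffs e f) (\<alpha> i) (a i) (b i) u v)" for f
  have "card I < card S"
    using card_conditions_less_card_coeffs[OF count] by (simp add: S_def I_def e_def)
  then have "\<exists>f. (\<exists>x\<in>S. f x \<noteq> 0) \<and> (\<forall>y\<in>I. \<Phi> f y = 0)"
    by (intro exists_nontrivial_solution)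
      (auto simp: S_def I_def \<Phi>_def poly_of_coeffs_diff shift_coeff_diff split: prod.splits)
  then obtain f where nonzero: "\<exists>x\<in>S. f x \<noteq> 0" and solution: "\<forall>y\<in>I. \<Phi> f y = 0"
    by blast
  define Q where "Q = poly_of_coeffs e f"
  have "hnonzero l Q"
    using nonzero unfolding hnonzero_def S_def
    by (force simp: Q_def poly_eq_iff coeff_poly_of_coeffs)
  moreover have "\<forall>i<L. zero_mult_ge l Q (\<alpha> i) (a i) (b i) s"
    using solution by (auto simp: zero_mult_ge_iff_shift_coeff Q_def I_def \<Phi>_def)
  moreover have "wdeg w1 w2 l Q < int s * T"
    using \<open>hnonzero l Q\<close>
  proof (rule wdeg_less)
    fix j assume "Q j \<noteq> 0"
    then have "coeff (Q j) (degree (Q j)) \<noteq> 0" by simp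
    then have "degree (Q j) < e j" unfolding Q_def coeff_poly_of_coeffs by (simp split: if_splits)
    then show "int (degree (Q j)) + w1 * int j + w2 * int (l - j) < int s * T"
      unfolding e_def by linarith
  qed
  ultimately show ?thesis by blast
qed

text \<open>For \<open>W > 0\<close> take \<open>s = W m\<close> and \<open>l = T m\<close> with \<open>m = L + 1\<close>: the difference of the two
  sides is then \<open>W m (m (T\<^sup>2 - L W) + T - L)\<close>, which is positive.\<close>
lemma exists_multiplicity_and_degree:
  fixes T W :: int
  assumes T: "0 < T" and W: "0 \<le> W" and L: "0 < L" and main: "int L * W < T\<^sup>2"
  shows "\<exists>s l :: nat. 0 < s \<and> 0 < l \<and>
    int L * int s * (int s + 1) < (int l + 1) * (2 * int s * T - W * int l)"
proof (cases "W = 0")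
  case True
  have "int L + 2 \<le> (int L + 2) * T" using T by simp
  then show ?thesis using True by (intro exI[of _ 1] exI[of _ "L + 1"]) (simp add: algebra_simps)
next
  case False
  define m where "m = int L + 1"
  define s where "s = nat (W * m)"
  define l where "l = nat (T * m)"
  have pos: "0 < W" "0 < m" using False W unfolding m_def by auto
  then have s: "int s = W * m" and l: "int l = T * m" using T by (simp_all add: s_def l_def)
  have "(int l + 1) * (2 * int s * T - W * int l) - int L * int s * (int s + 1) =
      W * m * (m * (T\<^sup>2 - int L * W) + T - int L)"
    unfolding s l by (simp add: algebra_simps power2_eq_square)
  moreover have "m \<le> m * (T\<^sup>2 - int L * W)" using main pos by simp
  then have "0 < m * (T\<^sup>2 - int L * W) + T - int L" using T m_def by linarith
  then have "0 < W * m * (m * (T\<^sup>2 - int L * W) + T - int L)" using pos by simp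
  moreover have "0 < s" "0 < l" using pos T by (simp_all add: s_def l_def)
  ultimately show ?thesis by (intro exI[of _ s] exI[of _ l]) auto
qed

lemma exists_interpolation_polynomial:
  fixes \<alpha> a b :: "nat \<Rightarrow> 'a::{finite,field}" and w1 w2 T :: int
  assumes "0 \<le> w1" "0 \<le> w2" "0 < L" "0 < T" "int L * (w1 + w2) < T\<^sup>2"
  shows "\<exists>s l Q. 0 < s \<and> 0 < l \<and> hnonzero l Q \<and>
    (\<forall>i<L. zero_mult_ge l Q (\<alpha> i) (a i) (b i) s) \<and> wdeg w1 w2 l Q < int s * T"
proof -
  obtain s l :: nat where "0 < s" "0 < l"
    and "int L * int s * (int s + 1) < (int l + 1) * (2 * int s * T - (w1 + w2) * int l)"
    using exists_multiplicity_and_degree[of T "w1 + w2" L] assms by auto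
  then show ?thesis using exists_interpolation_polynomial_of_count[of L s l T w1 w2 \<alpha> a b] by blast
qed

(* Only the key equation Lam, the degree bounds on A and B and the coprimality of H1 and H2
   enter the proof. *)
theorem proposition2:
  fixes n k :: nat and d :: int
    and alpha v c r :: "nat \<Rightarrow> 'a::{finite,field}"
    and H1 H2 A B :: "'a poly"
    and L :: nat and tau tauL :: int
  assumes k_pos: "0 < k" and k_le: "k \<le> n"
    and d_def: "d = int n - int k + 1"
    and alpha_inj: "inj_on alpha {..<n}"
    and v_nz: "\<forall>i<n. v i \<noteq> 0"
    and c_code: "c \<in> GRS n k alpha v"
    and r_vec: "\<forall>i\<ge>n. r i = 0"
    and eps_gt: "2 * int (card {i. i < n \<and> c i \<noteq> r i}) > d"
    and cop: "coprime H1 H2"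
    and Lam: "(\<Prod>i\<in>{i. i < n \<and> c i \<noteq> r i}. [:- alpha i, 1:]) = A * H1 + B * H2"
    and degA: "A \<noteq> 0 \<and> int (degree A) = int (card {i. i < n \<and> c i \<noteq> r i}) - int (degree H1)"
    and degB: "B = 0 \<or> int (degree B) \<le> int (card {i. i < n \<and> c i \<noteq> r i}) - d + int (degree H1)"
    and L_pos: "0 < L" and L_le: "L \<le> n"
    and tau_pos: "0 < tau" and tauL_pos: "0 < tauL"
    and w1_nn: "tau - int (degree H1) \<ge> 0"
    and w2_nn: "tau - d + int (degree H1) \<ge> 0"
    and main: "tauL ^ 2 > int L * (2 * tau - d)"
  shows "(\<exists>s l :: nat. \<exists>Q :: nat \<Rightarrow> 'a poly. 0 < s \<and> 0 < l \<and> hnonzero l Q \<and>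
            (\<forall>i<L. zero_mult_ge l Q (alpha i) (poly H2 (alpha i)) (- poly H1 (alpha i)) s) \<and>
            wdeg (tau - int (degree H1)) (tau - d + int (degree H1)) l Q < int s * tauL)
       \<and> ((int (card {i. i < n \<and> c i \<noteq> r i}) = tau \<and>
            int (card {i. i < L \<and> c i \<noteq> r i}) = tauL) \<longrightarrow>
          (\<forall>s l :: nat. \<forall>Q :: nat \<Rightarrow> 'a poly. (0 < s \<and> 0 < l \<and> hnonzero l Q \<and>
            (\<forall>i<L. zero_mult_ge l Q (alpha i) (poly H2 (alpha i)) (- poly H1 (alpha i)) s) \<and>
            wdeg (tau - int (degree H1)) (tau - d + int (degree H1)) l Q < int s * tauL)
            \<longrightarrow> heval l Q A B = 0))"
proof -
  define E where "E = {i. i < n \<and> c i \<noteq> r i}"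
  define F where "F = {i. i < L \<and> c i \<noteq> r i}"
  define w1 where "w1 = tau - int (degree H1)"
  define w2 where "w2 = tau - d + int (degree H1)"
  have w: "0 \<le> w1" "0 \<le> w2" using w1_nn w2_nn by (simp_all add: w1_def w2_def)
  have "int L * (w1 + w2) < tauL\<^sup>2" using main by (simp add: w1_def w2_def)
  with w L_pos tauL_pos have existence: "\<exists>s l Q. 0 < s \<and> 0 < l \<and> hnonzero l Q \<and>
      (\<forall>i<L. zero_mult_ge l Q (alpha i) (poly H2 (alpha i)) (- poly H1 (alpha i)) s) \<and>
      wdeg w1 w2 l Q < int s * tauL"
    by (rule exists_interpolation_polynomial)
  have on_curve: "poly H2 (alpha i) * poly B (alpha i) = - poly H1 (alpha i) * poly A (alpha i)"
    if "i \<in> F" for i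
    using Lam that L_le by (intro on_curve_of_locator_root) (auto simp: F_def)
  have "heval l Q A B = 0"
    if "int (card E) = tau" "int (card F) = tauL"
      and "0 < s \<and> 0 < l \<and> hnonzero l Q \<and>
        (\<forall>i<L. zero_mult_ge l Q (alpha i) (poly H2 (alpha i)) (- poly H1 (alpha i)) s) \<and>
        wdeg w1 w2 l Q < int s * tauL" for s l Q
    using that w
  proof (intro heval_eq_0_of_zeros[where F = F and a = "\<lambda>i. poly H2 (alpha i)"
        and b = "\<lambda>i. - poly H1 (alpha i)"])
    show "inj_on alpha F" using alpha_inj by (rule inj_on_subset) (use L_le in \<open>auto simp: F_def\<close>)
    show "int (degree A) \<le> w1" using degA that by (simp add: w1_def E_def)
    show "int (degree B) \<le> w2" using degB that w by (auto simp: w2_def E_def)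
  qed (use coprime_poly_0[OF cop] in \<open>auto simp: F_def on_curve\<close>)
  then show ?thesis using existence unfolding E_def F_def w1_def w2_def by blast
qed

end
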